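(* Let $\mathbf{L}$ be an intermediate propositional logic and $\mathbf{QL}$ a first-order extension of $\mathbf{L}$ that is preserved under shadow. Then $\varepsilon\tau^+(\mathbf{QL})$ is conservative over $\mathbf{L}$ for propositional formulas: every propositional formula provable in $\varepsilon\tau^+(\mathbf{QL})$ belongs to $\mathbf{L}$.
   Context: An intermediate propositional logic is a set of propositional formulas containing intuitionistic propositional logic, contained in classical propositional logic, closed under modus ponens and substitution. Propositional variables are regarded as 0-ary predicate symbols of the first-order language. $\varepsilon\tau$-terms: for any formula $A(x)$, $\varepsilon x\,A(x)$ and $\tau x\,A(x)$ are terms. Critical formulas: $A(t)\to A(\varepsilon x\,A(x))$ and $A(\tau x\,A(x))\to A(t)$. $\varepsilon\tau^+(\mathbf{QL})$ is the full first-order language (with quantifiers) extended by $\varepsilon\tau$-terms, provability being derivability in $\mathbf{QL}$ (its axioms, modus ponens and quantifier rules) from critical formulas. Shadow: $P(t_1,\dots,t_n)^s=X_P$ (a propositional variable depending only on $P$), $(t_1=t_2)^s=\top$ (a theorem of $\mathbf{L}$), $^s$ commutes with $\land,\lor,\to,\lnot$, and $(\exists x\,A(x))^s=(\forall x\,A(x))^s=A(x)^s$. A first-order extension $\mathbf{QL}$ of $\mathbf{L}$ is preserved under shadow if (1) $\vdash_{\mathbf{L}}A^s$ for every quantifier axiom $A$ of $\mathbf{QL}$, and (2) whenever $A_1,\dots,A_n\vdash_{\mathbf{QL}}B$ is a rule of inference of $\mathbf{QL}$, $A_1^s,\dots,A_n^s\vdash_{\mathbf{L}}B^s$. *)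

theory Defs
  imports Main
begin

datatype pform = PVar nat | PNeg pform | PAnd pform pform | POr pform pform | PImp pform pform

fun psubst :: "(nat \<Rightarrow> pform) \<Rightarrow> pform \<Rightarrow> pform" where
  "psubst \<sigma> (PVar n) = \<sigma> n"
| "psubst \<sigma> (PNeg A) = PNeg (psubst \<sigma> A)"
| "psubst \<sigma> (PAnd A B) = PAnd (psubst \<sigma> A) (psubst \<sigma> B)"
| "psubst \<sigma> (POr A B) = POr (psubst \<sigma> A) (psubst \<sigma> B)"
| "psubst \<sigma> (PImp A B) = PImp (psubst \<sigma> A) (psubst \<sigma> B)"

fun peval :: "(nat \<Rightarrow> bool) \<Rightarrow> pform \<Rightarrow> bool" where
  "peval v (PVar n) = v n"
| "peval v (PNeg A) = (\<not> peval v A)"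
| "peval v (PAnd A B) = (peval v A \<and> peval v B)"
| "peval v (POr A B) = (peval v A \<or> peval v B)"
| "peval v (PImp A B) = (peval v A \<longrightarrow> peval v B)"

definition CPC :: "pform set" where
  "CPC = {A. \<forall>v. peval v A}"

text \<open>Intuitionistic propositional logic: Hilbert system (Kleene) with modus ponens.\<close>
inductive_set IPC :: "pform set" where
  K: "PImp A (PImp B A) \<in> IPC"
| S: "PImp (PImp A (PImp B C)) (PImp (PImp A B) (PImp A C)) \<in> IPC"
| AndE1: "PImp (PAnd A B) A \<in> IPC"
| AndE2: "PImp (PAnd A B) B \<in> IPC"
| AndI: "PImp A (PImp B (PAnd A B)) \<in> IPC"
| OrI1: "PImp A (POr A B) \<in> IPC"
| OrI2: "PImp B (POr A B) \<in> IPC"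
| OrE: "PImp (PImp A C) (PImp (PImp B C) (PImp (POr A B) C)) \<in> IPC"
| NegI: "PImp (PImp A B) (PImp (PImp A (PNeg B)) (PNeg A)) \<in> IPC"
| NegE: "PImp (PNeg A) (PImp A B) \<in> IPC"
| MP: "PImp A B \<in> IPC \<Longrightarrow> A \<in> IPC \<Longrightarrow> B \<in> IPC"

definition intermediate_logic :: "pform set \<Rightarrow> bool" where
  "intermediate_logic L \<longleftrightarrow>
     IPC \<subseteq> L \<and> L \<subseteq> CPC \<and>
     (\<forall>A B. PImp A B \<in> L \<longrightarrow> A \<in> L \<longrightarrow> B \<in> L) \<and>
     (\<forall>\<sigma> A. A \<in> L \<longrightarrow> psubst \<sigma> A \<in> L)"

inductive pderiv :: "pform set \<Rightarrow> pform set \<Rightarrow> pform \<Rightarrow> bool" for L H where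
  ax: "A \<in> L \<Longrightarrow> pderiv L H A"
| hyp: "A \<in> H \<Longrightarrow> pderiv L H A"
| mp: "pderiv L H (PImp A B) \<Longrightarrow> pderiv L H A \<Longrightarrow> pderiv L H B"

text \<open>The fixed theorem \<open>\<top>\<close> of every intermediate logic.\<close>
definition ptop :: pform where "ptop = PImp (PVar 0) (PVar 0)"

text \<open>Predicate symbols are natural numbers (a predicate symbol with no arguments is
the propositional variable of the same number); function symbols are of type 'f.\<close>
datatype 'f trm = Var nat | Fn 'f "'f trm list" | Eps nat "'f form" | Tau nat "'f form"
and 'f form = Pred nat "'f trm list" | Eq "'f trm" "'f trm"
  | Neg "'f form" | And "'f form" "'f form" | Or "'f form" "'f form" | Imp "'f form" "'f form"
  | All nat "'f form" | Ex nat "'f form"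

fun fv_t :: "'f trm \<Rightarrow> nat set" and fv_f :: "'f form \<Rightarrow> nat set" where
  "fv_t (Var x) = {x}"
| "fv_t (Fn f ts) = (\<Union>t\<in>set ts. fv_t t)"
| "fv_t (Eps y A) = fv_f A - {y}"
| "fv_t (Tau y A) = fv_f A - {y}"
| "fv_f (Pred P ts) = (\<Union>t\<in>set ts. fv_t t)"
| "fv_f (Eq s t) = fv_t s \<union> fv_t t"
| "fv_f (Neg A) = fv_f A"
| "fv_f (And A B) = fv_f A \<union> fv_f B"
| "fv_f (Or A B) = fv_f A \<union> fv_f B"
| "fv_f (Imp A B) = fv_f A \<union> fv_f B"
| "fv_f (All y A) = fv_f A - {y}"
| "fv_f (Ex y A) = fv_f A - {y}"

fun subst_t :: "nat \<Rightarrow> 'f trm \<Rightarrow> 'f trm \<Rightarrow> 'f trm"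
and subst_f :: "nat \<Rightarrow> 'f trm \<Rightarrow> 'f form \<Rightarrow> 'f form" where
  "subst_t x u (Var y) = (if y = x then u else Var y)"
| "subst_t x u (Fn f ts) = Fn f (map (subst_t x u) ts)"
| "subst_t x u (Eps y A) = (if y = x then Eps y A else Eps y (subst_f x u A))"
| "subst_t x u (Tau y A) = (if y = x then Tau y A else Tau y (subst_f x u A))"
| "subst_f x u (Pred P ts) = Pred P (map (subst_t x u) ts)"
| "subst_f x u (Eq s t) = Eq (subst_t x u s) (subst_t x u t)"
| "subst_f x u (Neg A) = Neg (subst_f x u A)"
| "subst_f x u (And A B) = And (subst_f x u A) (subst_f x u B)"
| "subst_f x u (Or A B) = Or (subst_f x u A) (subst_f x u B)"
| "subst_f x u (Imp A B) = Imp (subst_f x u A) (subst_f x u B)"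
| "subst_f x u (All y A) = (if y = x then All y A else All y (subst_f x u A))"
| "subst_f x u (Ex y A) = (if y = x then Ex y A else Ex y (subst_f x u A))"

fun freefor_t :: "'f trm \<Rightarrow> nat \<Rightarrow> 'f trm \<Rightarrow> bool"
and freefor_f :: "'f trm \<Rightarrow> nat \<Rightarrow> 'f form \<Rightarrow> bool" where
  "freefor_t u x (Var y) = True"
| "freefor_t u x (Fn f ts) = (\<forall>t\<in>set ts. freefor_t u x t)"
| "freefor_t u x (Eps y A) = (x \<notin> fv_t (Eps y A) \<or> (y \<notin> fv_t u \<and> freefor_f u x A))"
| "freefor_t u x (Tau y A) = (x \<notin> fv_t (Tau y A) \<or> (y \<notin> fv_t u \<and> freefor_f u x A))"
| "freefor_f u x (Pred P ts) = (\<forall>t\<in>set ts. freefor_t u x t)"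
| "freefor_f u x (Eq s t) = (freefor_t u x s \<and> freefor_t u x t)"
| "freefor_f u x (Neg A) = freefor_f u x A"
| "freefor_f u x (And A B) = (freefor_f u x A \<and> freefor_f u x B)"
| "freefor_f u x (Or A B) = (freefor_f u x A \<and> freefor_f u x B)"
| "freefor_f u x (Imp A B) = (freefor_f u x A \<and> freefor_f u x B)"
| "freefor_f u x (All y A) = (x \<notin> fv_f (All y A) \<or> (y \<notin> fv_t u \<and> freefor_f u x A))"
| "freefor_f u x (Ex y A) = (x \<notin> fv_f (Ex y A) \<or> (y \<notin> fv_t u \<and> freefor_f u x A))"

definition critical :: "'f form set" where
  "critical =
    {Imp (subst_f x t A) (subst_f x (Eps x A) A) | x t A.
        freefor_f t x A \<and> freefor_f (Eps x A) x A}
  \<union> {Imp (subst_f x (Tau x A) A) (subst_f x t A) | x t A.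
        freefor_f t x A \<and> freefor_f (Tau x A) x A}"

fun emb :: "pform \<Rightarrow> 'f form" where
  "emb (PVar n) = Pred n []"
| "emb (PNeg A) = Neg (emb A)"
| "emb (PAnd A B) = And (emb A) (emb B)"
| "emb (POr A B) = Or (emb A) (emb B)"
| "emb (PImp A B) = Imp (emb A) (emb B)"

fun finst :: "(nat \<Rightarrow> 'f form) \<Rightarrow> pform \<Rightarrow> 'f form" where
  "finst \<sigma> (PVar n) = \<sigma> n"
| "finst \<sigma> (PNeg A) = Neg (finst \<sigma> A)"
| "finst \<sigma> (PAnd A B) = And (finst \<sigma> A) (finst \<sigma> B)"
| "finst \<sigma> (POr A B) = Or (finst \<sigma> A) (finst \<sigma> B)"
| "finst \<sigma> (PImp A B) = Imp (finst \<sigma> A) (finst \<sigma> B)"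

fun shadow :: "'f form \<Rightarrow> pform" where
  "shadow (Pred P ts) = PVar P"
| "shadow (Eq s t) = ptop"
| "shadow (Neg A) = PNeg (shadow A)"
| "shadow (And A B) = PAnd (shadow A) (shadow B)"
| "shadow (Or A B) = POr (shadow A) (shadow B)"
| "shadow (Imp A B) = PImp (shadow A) (shadow B)"
| "shadow (All x A) = shadow A"
| "shadow (Ex x A) = shadow A"

text \<open>A first-order extension QL of L is given by a set QAx of quantifier axioms and a set
Rls of (further) rules of inference, each a pair (premises, conclusion) of formulas of
the full language.\<close>

definition preserved_under_shadow :: "pform set \<Rightarrow> 'f form set \<Rightarrow> ('f form list \<times> 'f form) set \<Rightarrow> bool" where
  "preserved_under_shadow L QAx Rls \<longleftrightarrow>
     (\<forall>A\<in>QAx. shadow A \<in> L) \<and>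
     (\<forall>(As, B)\<in>Rls. pderiv L (shadow ` set As) (shadow B))"

inductive etplus_prov :: "pform set \<Rightarrow> 'f form set \<Rightarrow> ('f form list \<times> 'f form) set \<Rightarrow> 'f form \<Rightarrow> bool"
  for L QAx Rls where
  propax: "A \<in> L \<Longrightarrow> etplus_prov L QAx Rls (finst \<sigma> A)"
| qax: "A \<in> QAx \<Longrightarrow> etplus_prov L QAx Rls A"
| crit: "A \<in> critical \<Longrightarrow> etplus_prov L QAx Rls A"
| mp: "etplus_prov L QAx Rls (Imp A B) \<Longrightarrow> etplus_prov L QAx Rls A \<Longrightarrow> etplus_prov L QAx Rls B"
| rule: "(As, B) \<in> Rls \<Longrightarrow> (\<forall>A\<in>set As. etplus_prov L QAx Rls A) \<Longrightarrow> etplus_prov L QAx Rls B"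

end

theory Submission
  imports Defs
begin

text \<open>The shadow map erases terms and quantifiers, so it sends every critical formula to a
propositional instance of \<open>X \<longrightarrow> X\<close>, every substitution instance of a theorem of L to a
substitution instance of it, and (by preservation under shadow) every quantifier axiom and
rule of QL into L. Hence the shadow of any theorem of \<epsilon>\<tau>+(QL) lies in L, and the shadow
of a propositional formula is the formula itself.\<close>

lemma shadow_subst_f [simp]: "shadow (subst_f x u A) = shadow A"
  by (induction A rule: shadow.induct) auto

lemma shadow_finst: "shadow (finst \<sigma> A) = psubst (shadow \<circ> \<sigma>) A"
  by (induction A) auto

lemma shadow_emb [simp]: "shadow (emb A) = A"
  by (induction A) auto

lemma shadow_critical:
  assumes "A \<in> critical"
  obtains X where "shadow A = PImp X X"
  using assms unfolding critical_def by auto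

lemma IPC_imp_refl: "PImp A A \<in> IPC"
  by (meson IPC.K IPC.MP IPC.S)

lemma intermediate_logic_imp_refl:
  assumes "intermediate_logic L"
  shows "PImp A A \<in> L"
  using assms IPC_imp_refl unfolding intermediate_logic_def by blast

lemma pderiv_theorems_closed:
  assumes mp_closed: "\<And>A B. PImp A B \<in> L \<Longrightarrow> A \<in> L \<Longrightarrow> B \<in> L"
    and "pderiv L H B" and "H \<subseteq> L"
  shows "B \<in> L"
  using assms(2,3) by induction (auto intro: mp_closed)

lemma etplus_prov_shadow:
  assumes L: "intermediate_logic L" and preserved: "preserved_under_shadow L QAx Rls"
    and "etplus_prov L QAx Rls F"
  shows "shadow F \<in> L"
  using assms(3)
proof induction
  case (propax A \<sigma>)
  then show ?case using L unfolding intermediate_logic_def by (simp add: shadow_finst)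
next
  case (qax A)
  then show ?case using preserved unfolding preserved_under_shadow_def by blast
next
  case (crit A)
  then show ?case by (metis shadow_critical intermediate_logic_imp_refl[OF L])
next
  case (mp A B)
  then show ?case using L unfolding intermediate_logic_def by auto
next
  case (rule As B)
  have "pderiv L (shadow ` set As) (shadow B)"
    using rule.hyps preserved unfolding preserved_under_shadow_def by blast
  moreover have "shadow ` set As \<subseteq> L"
    using rule.IH by blast
  ultimately show ?case
    using L pderiv_theorems_closed unfolding intermediate_logic_def by blast
qed

theorem mainTheorem2:
  fixes L :: "pform set" and QAx :: "'f form set" and Rls :: "('f form list \<times> 'f form) set"
  assumes "intermediate_logic L"
    and "preserved_under_shadow L QAx Rls"
    and "etplus_prov L QAx Rls (emb A)"
  shows "A \<in> L"
  using etplus_prov_shadow[OF assms] by simp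

end
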